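(* Let $l\ge 1$, let $a_j,b_j,k_j$ $(1\le j\le l)$ be integers with $k_j\ge 1$ and $a_1\cdots a_l\ne 0$, and let $f(t)=\prod_{j=1}^{l}(a_jt^{k_j}-b_j)\in\mathbb{Z}[t]$. Then there is a constant $c=c(k_1,\ldots,k_l)>0$ such that there are polynomials $g\in\mathbb{Z}[t]$ of arbitrarily large degree $d$ for which $f(g(t))$ factors as a product of polynomials of degree at most $cd/(\log\log d)^{1/l}$. Consequently $f$ admits polysmoothness $\varepsilon$ for every $\varepsilon>0$.
   Context: A polynomial $f\in\mathbb{Z}[t]$ of positive degree admits polysmoothness $\theta$ (for a real $\theta\ge 0$) if there exists a non-constant polynomial $g\in\mathbb{Z}[t]$ such that every irreducible factor of $f(g(t))$ has degree at most $\theta\,(\deg f)(\deg g)$. *)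

theory Defs
  imports Complex_Main "HOL-Computational_Algebra.Polynomial"
begin

definition admits_polysmoothness :: "int poly \<Rightarrow> real \<Rightarrow> bool" where
  "admits_polysmoothness f \<theta> \<longleftrightarrow>
     (\<exists>g :: int poly. degree g > 0 \<and>
        (\<forall>q :: int poly. irreducible q \<and> q dvd pcompose f g \<longrightarrow>
            real (degree q) \<le> \<theta> * real (degree f) * real (degree g)))"

end

(*
  Substituting g = c t^E turns the factor a_j t^k_j - b_j of f into a_j c^k_j t^(k_j E) - b_j.
  If E = e_1 ... e_l with pairwise coprime e_j, each coprime to k_j, then c can be chosen with
  a_j c^k_j = b_j gamma_j^e_j for all j, and the j-th factor becomes
  b_j ((gamma_j t^(k_j E / e_j))^e_j - 1), which splits over the integers, via the cyclotomic
  polynomials, into factors of degree at most k_j E phi(e_j) / e_j. Let the e_j be the products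
  of the l classes of a partition of the primes in (K, Y] into classes of nearly equal weight
  sum ln (p / (p - 1)). Mertens' lower bound sum_{p <= Y} ln (p / (p - 1)) >= ln ln Y then gives
  phi(e_j) / e_j = prod (1 - 1/p) << (ln Y)^(-1/l), while ln ln E <= 2 ln (Y + 1).
*)

theory Submission
  imports
    Defs
    "HOL-Computational_Algebra.Fundamental_Theorem_Algebra"
    "HOL-Computational_Algebra.Polynomial_Factorial"
    "HOL-Number_Theory.Totient"
    "HOL-Analysis.Harmonic_Numbers"
begin

section \<open>Cyclotomic polynomials with integer coefficients\<close>

definition primitive_roots_unity :: "nat \<Rightarrow> complex set" where
  "primitive_roots_unity d = {z. z ^ d = 1 \<and> (\<forall>j. 0 < j \<and> j < d \<longrightarrow> z ^ j \<noteq> 1)}"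

definition cyclotomic :: "nat \<Rightarrow> complex poly" where
  "cyclotomic d = (\<Prod>z\<in>primitive_roots_unity d. [:-z, 1:])"

lemma finite_primitive_roots_unity: "d > 0 \<Longrightarrow> finite (primitive_roots_unity d)"
  by (rule finite_subset[of _ "{z. z ^ d = 1}"])
     (auto simp: primitive_roots_unity_def intro: finite_nth_roots)

lemma roots_unity_eq_UN_primitive_roots_unity:
  assumes "n > 0"
  shows "{z::complex. z ^ n = 1} = (\<Union>d\<in>{d. d dvd n}. primitive_roots_unity d)"
proof (intro equalityI subsetI)
  fix z :: complex assume "z \<in> {z. z ^ n = 1}"
  then have z: "z ^ n = 1" by simp
  define d where "d = (LEAST j. 0 < j \<and> z ^ j = 1)"
  have d: "0 < d" "z ^ d = 1"
    using LeastI[of "\<lambda>j. 0 < j \<and> z ^ j = 1" n] assms z unfolding d_def by auto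
  have below_d: "z ^ j \<noteq> 1" if "0 < j" "j < d" for j
    using not_less_Least that unfolding d_def by blast
  have "z ^ n = (z ^ d) ^ (n div d) * z ^ (n mod d)"
    by (subst mult_div_mod_eq[of d n, symmetric]) (simp only: power_add power_mult)
  then have "z ^ (n mod d) = 1"
    using z d by simp
  then have "n mod d = 0"
    using below_d[of "n mod d"] d by (meson mod_less_divisor neq0_conv)
  then have "d dvd n" by auto
  with d below_d show "z \<in> (\<Union>d\<in>{d. d dvd n}. primitive_roots_unity d)"
    by (auto simp: primitive_roots_unity_def)
next
  fix z assume "z \<in> (\<Union>d\<in>{d. d dvd n}. primitive_roots_unity d)"
  then obtain d m where "z ^ d = 1" "n = d * m"
    by (auto simp: primitive_roots_unity_def elim!: dvdE)
  then show "z \<in> {z. z ^ n = 1}"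
    by (simp add: power_mult)
qed

lemma primitive_roots_unity_disjoint:
  assumes "d \<noteq> d'" "0 < d" "0 < d'"
  shows "primitive_roots_unity d \<inter> primitive_roots_unity d' = {}"
  using assms by (cases "d < d'") (auto simp: primitive_roots_unity_def)

lemma prod_roots_unity:
  assumes "n > 0"
  shows "(\<Prod>z | z ^ n = 1. [:-z, 1:]) = (monom 1 n - 1 :: complex poly)"
proof -
  let ?P = "monom 1 n - 1 :: complex poly"
  have roots: "poly ?P z = 0 \<longleftrightarrow> z ^ n = 1" for z
    by (simp add: poly_monom)
  have "degree ?P = n"
    using assms by (subst diff_conv_add_uminus, subst degree_add_eq_left) (simp_all add: degree_monom_eq)
  then have "lead_coeff ?P = 1"
    using assms by simp
  moreover have "rsquarefree ?P"
    unfolding rsquarefree_roots using assms by (auto simp: pderiv_diff pderiv_monom poly_monom power_0_left)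
  ultimately show ?thesis
    using complex_poly_decompose_rsquarefree[of ?P] roots by simp
qed

lemma prod_cyclotomic_divisors:
  assumes "n > 0"
  shows "(\<Prod>d | d dvd n. cyclotomic d) = monom 1 n - 1"
proof -
  have pos: "0 < d" if "d dvd n" for d
    using assms that by (auto intro: Nat.gr0I)
  have "monom 1 n - 1 = (\<Prod>z\<in>(\<Union>d\<in>{d. d dvd n}. primitive_roots_unity d). [:-z, 1:])"
    using prod_roots_unity[OF assms] roots_unity_eq_UN_primitive_roots_unity[OF assms] by simp
  also have "\<dots> = (\<Prod>d | d dvd n. cyclotomic d)"
    unfolding cyclotomic_def using assms pos
  proof (subst prod.UNION_disjoint)
    show "\<forall>d\<in>{d. d dvd n}. finite (primitive_roots_unity d)"
      using pos finite_primitive_roots_unity by blast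
    show "\<forall>d\<in>{d. d dvd n}. \<forall>d'\<in>{d. d dvd n}. d \<noteq> d' \<longrightarrow>
        primitive_roots_unity d \<inter> primitive_roots_unity d' = {}"
      using pos primitive_roots_unity_disjoint by blast
  qed (use assms in simp_all)
  finally show ?thesis ..
qed

lemma lead_coeff_cyclotomic: "lead_coeff (cyclotomic d) = 1"
  by (simp add: cyclotomic_def lead_coeff_prod)

lemma primitive_roots_unity_subset_totatives:
  assumes d: "d > 0"
  shows "primitive_roots_unity d \<subseteq> (\<lambda>k. cis (2 * pi * real k / real d)) ` totatives d"
proof
  fix z assume z: "z \<in> primitive_roots_unity d"
  then obtain k where k: "k < d" "z = cis (2 * pi * real k / real d)"
    using Complex.bij_betw_roots_unity[OF d] by (auto simp: bij_betw_def primitive_roots_unity_def)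
  show "z \<in> (\<lambda>k. cis (2 * pi * real k / real d)) ` totatives d"
  proof (cases "k = 0")
    case True
    then have "z ^ 1 = 1"
      using k by simp
    then have "\<not> 1 < d"
      using z by (auto simp: primitive_roots_unity_def)
    then have "d = 1"
      using d by simp
    with k True show ?thesis by (intro image_eqI[of _ _ 1]) (auto simp: in_totatives_iff)
  next
    case False
    have "coprime k d"
    proof (rule ccontr)
      assume "\<not> coprime k d"
      define g where "g = gcd k d"
      have "g \<noteq> 1" "g > 0"
        using \<open>\<not> coprime k d\<close> False by (simp_all add: g_def coprime_iff_gcd_eq_1)
      then have g: "g > 1" by linarith
      obtain j where dj: "d = g * j" unfolding g_def by (meson gcd_dvd2 dvdE)
      obtain i where ki: "k = g * i" unfolding g_def by (meson gcd_dvd1 dvdE)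
      have j: "0 < j" "j < d" using dj g d by simp_all
      have "z ^ j = cis (real j * (2 * pi * real k / real d))"
        using k by (simp add: Complex.DeMoivre)
      also have "real j * (2 * pi * real k / real d) = 2 * pi * real i"
        using dj ki j by (simp add: field_simps)
      also have "cis (2 * pi * real i) = 1" by (rule cis_multiple_2pi) simp
      finally show False using z j by (auto simp: primitive_roots_unity_def)
    qed
    with k False show ?thesis by (intro image_eqI[of _ _ k]) (auto simp: in_totatives_iff)
  qed
qed

lemma degree_cyclotomic_le:
  assumes "d > 0"
  shows "degree (cyclotomic d) \<le> totient d"
proof -
  have "degree (cyclotomic d) = card (primitive_roots_unity d)"
    unfolding cyclotomic_def using finite_primitive_roots_unity[OF assms]
    by (subst degree_prod_eq_sum_degree) auto
  also have "\<dots> \<le> card ((\<lambda>k. cis (2 * pi * real k / real d)) ` totatives d)"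
    by (rule card_mono[OF _ primitive_roots_unity_subset_totatives[OF assms]]) simp
  also have "\<dots> \<le> totient d"
    unfolding totient_def by (rule card_image_le) simp
  finally show ?thesis .
qed

definition int_coeffs :: "'a::comm_ring_1 poly \<Rightarrow> bool" where
  "int_coeffs p \<longleftrightarrow> (\<forall>i. coeff p i \<in> \<int>)"

lemma int_coeffs_mult: "int_coeffs p \<Longrightarrow> int_coeffs q \<Longrightarrow> int_coeffs (p * q)"
  by (auto simp: int_coeffs_def coeff_mult intro!: Ints_sum Ints_mult)

lemma int_coeffs_prod: "(\<And>x. x \<in> A \<Longrightarrow> int_coeffs (f x)) \<Longrightarrow> int_coeffs (prod f A)"
  by (induction A rule: infinite_finite_induct) (simp_all add: int_coeffs_mult, auto simp: int_coeffs_def)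

lemma int_coeffs_monom_minus_one: "int_coeffs (monom 1 n - 1)"
  by (auto simp: int_coeffs_def coeff_monom intro!: Ints_diff)

text \<open>Long division by a monic polynomial only ever divides by its leading coefficient 1.\<close>
lemma int_coeffs_quotient_monic:
  assumes "int_coeffs P" "int_coeffs R" "lead_coeff R = 1" "P = Q * R"
  shows "int_coeffs Q"
  using assms
proof (induction "degree Q" arbitrary: Q P rule: less_induct)
  case less
  show ?case
  proof (cases "Q = 0")
    case True
    then show ?thesis by (simp add: int_coeffs_def)
  next
    case False
    define c where "c = lead_coeff Q"
    define Q' where "Q' = Q - monom c (degree Q)"
    have "coeff P (degree Q + degree R) = c"
      using less.prems(3,4) coeff_mult_degree_sum[of Q R] by (simp add: c_def)
    then have c: "c \<in> \<int>"
      using less.prems(1) by (metis int_coeffs_def)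
    have "int_coeffs (P - monom c (degree Q) * R)"
      using less.prems(1,2) c
      by (auto simp: int_coeffs_def coeff_mult coeff_monom intro!: Ints_diff Ints_sum Ints_mult)
    moreover have "P - monom c (degree Q) * R = Q' * R"
      by (simp add: Q'_def less.prems(4) algebra_simps)
    moreover have "Q' = 0 \<or> degree Q' < degree Q"
    proof -
      have "degree Q' \<le> degree Q"
        unfolding Q'_def by (intro degree_diff_le) (simp_all add: degree_monom_le)
      moreover have "coeff Q' (degree Q) = 0"
        by (simp add: Q'_def c_def)
      ultimately show ?thesis
        by (metis le_neq_implies_less leading_coeff_0_iff)
    qed
    ultimately have "int_coeffs Q'"
      using less.hyps less.prems(2,3) by (auto simp: int_coeffs_def)
    then show ?thesis
      using c by (auto simp: int_coeffs_def Q'_def coeff_monom algebra_simps intro!: Ints_add)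
  qed
qed

lemma int_coeffs_cyclotomic: "n > 0 \<Longrightarrow> int_coeffs (cyclotomic n)"
proof (induction n rule: less_induct)
  case (less n)
  define R where "R = (\<Prod>d\<in>{d. d dvd n} - {n}. cyclotomic d)"
  have "monom 1 n - 1 = cyclotomic n * R"
    using prod_cyclotomic_divisors[OF less.prems] prod.remove[of "{d. d dvd n}" n cyclotomic] less.prems
    by (simp add: R_def)
  moreover have "int_coeffs R"
    unfolding R_def
  proof (rule int_coeffs_prod)
    fix d assume "d \<in> {d. d dvd n} - {n}"
    then have "d < n" "0 < d"
      using less.prems by (auto intro: Nat.gr0I dest: dvd_imp_le)
    then show "int_coeffs (cyclotomic d)"
      using less.IH by simp
  qed
  moreover have "lead_coeff R = 1"
    by (simp add: R_def lead_coeff_prod lead_coeff_cyclotomic)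
  ultimately show ?case
    using int_coeffs_quotient_monic int_coeffs_monom_minus_one by blast
qed

lemma map_poly_of_int_mult:
  "map_poly (of_int :: int \<Rightarrow> 'a::comm_ring_1) (p * q) = map_poly of_int p * map_poly of_int q"
  by (rule poly_eqI) (simp add: coeff_map_poly coeff_mult of_int_sum)

lemma map_poly_of_int_prod:
  "map_poly (of_int :: int \<Rightarrow> 'a::comm_ring_1) (prod f A) = (\<Prod>x\<in>A. map_poly of_int (f x))"
  by (induction A rule: infinite_finite_induct) (auto simp: map_poly_of_int_mult)

lemma map_poly_of_int_eq_iff:
  "map_poly (of_int :: int \<Rightarrow> 'a::ring_char_0) p = map_poly of_int q \<longleftrightarrow> p = q"
  by (metis coeff_map_poly of_int_0 of_int_eq_iff poly_eqI)

definition cyclotomic_int :: "nat \<Rightarrow> int poly" where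
  "cyclotomic_int d = (SOME q. map_poly of_int q = cyclotomic d)"

lemma map_poly_of_int_cyclotomic_int:
  assumes "d > 0"
  shows "map_poly of_int (cyclotomic_int d) = cyclotomic d"
proof -
  obtain q where "cyclotomic d = map_poly of_int q"
    using int_coeffs_cyclotomic[OF assms] intpolyE unfolding int_coeffs_def by blast
  then show ?thesis
    unfolding cyclotomic_int_def by (metis (mono_tags) someI)
qed

lemma degree_cyclotomic_int_le: "d > 0 \<Longrightarrow> degree (cyclotomic_int d) \<le> totient d"
  using degree_cyclotomic_le[of d] degree_map_poly[of "of_int :: int \<Rightarrow> complex" "cyclotomic_int d"]
  by (simp add: map_poly_of_int_cyclotomic_int)

lemma prod_cyclotomic_int_divisors:
  assumes "n > 0"
  shows "(\<Prod>d | d dvd n. cyclotomic_int d) = monom 1 n - 1"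
proof -
  have "map_poly (of_int :: int \<Rightarrow> complex) (\<Prod>d | d dvd n. cyclotomic_int d) =
      (\<Prod>d | d dvd n. cyclotomic d)"
    unfolding map_poly_of_int_prod
    by (intro prod.cong refl) (use assms in \<open>simp add: dvd_pos_nat map_poly_of_int_cyclotomic_int\<close>)
  also have "\<dots> = monom 1 n - 1"
    by (rule prod_cyclotomic_divisors[OF assms])
  also have "(monom 1 n - 1 :: complex poly) = map_poly of_int (monom 1 n - 1)"
    by (rule poly_eqI) (simp add: coeff_map_poly coeff_monom)
  finally show ?thesis
    by (simp only: map_poly_of_int_eq_iff)
qed

lemma monom_minus_one_factorization:
  assumes "e > 0"
  obtains qs :: "int poly list"
  where "prod_list qs = monom 1 e - 1" "\<forall>q\<in>set qs. degree q \<le> totient e"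
proof
  let ?qs = "map cyclotomic_int (sorted_list_of_set {d. d dvd e})"
  show "prod_list ?qs = monom 1 e - 1"
    using assms prod_cyclotomic_int_divisors[OF assms]
    by (simp add: prod.distinct_set_conv_list[symmetric])
  show "\<forall>q\<in>set ?qs. degree q \<le> totient e"
  proof
    fix q assume "q \<in> set ?qs"
    then obtain d where "d dvd e" "q = cyclotomic_int d"
      using assms by auto
    then show "degree q \<le> totient e"
      using assms degree_cyclotomic_int_le[of d] totient_dvd_mono[of d e] dvd_pos_nat[of e d] by simp
  qed
qed

section \<open>Factoring the substituted binomials\<close>

lemma pcompose_monom: "pcompose (monom a k) q = smult a (q ^ k)"
  by (induction k) (simp_all add: monom_0 monom_Suc pcompose_pCons)

lemma pcompose_prod_list: "pcompose (prod_list ps) q = prod_list (map (\<lambda>p. pcompose p q) ps)"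
  by (induction ps) (simp_all add: pcompose_mult pcompose_1)

lemma binomial_factorization:
  fixes A b :: int
  assumes e: "e > 0" and s: "s > 0" and power: "b \<noteq> 0 \<Longrightarrow> \<exists>\<gamma>. A = b * \<gamma> ^ e"
  obtains qs :: "int poly list"
  where "prod_list qs = monom A (e * s) - [:b:]" "\<forall>q\<in>set qs. degree q \<le> totient e * s"
proof (cases "b = 0")
  case True
  let ?qs = "[:A:] # replicate (e * s) [:0, 1:]"
  have "prod_list ?qs = monom A (e * s) - [:b:]"
    using True by (simp add: monom_altdef)
  moreover have "1 \<le> totient e * s"
    using e s by (simp add: Suc_le_eq)
  then have "\<forall>q\<in>set ?qs. degree q \<le> totient e * s"
    by auto
  ultimately show ?thesis
    by (rule that)
next
  case False
  then obtain \<gamma> where \<gamma>: "A = b * \<gamma> ^ e"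
    using power by blast
  obtain qs :: "int poly list"
    where qs: "prod_list qs = monom 1 e - 1" "\<forall>q\<in>set qs. degree q \<le> totient e"
    by (rule monom_minus_one_factorization[OF e])
  let ?qs = "[:b:] # map (\<lambda>q. pcompose q (monom \<gamma> s)) qs"
  have "prod_list ?qs = [:b:] * pcompose (monom 1 e - 1) (monom \<gamma> s)"
    by (simp add: pcompose_prod_list[symmetric] qs(1))
  also have "\<dots> = monom A (e * s) - [:b:]"
    by (simp add: \<gamma> pcompose_diff pcompose_monom pcompose_1 monom_power smult_monom
        right_diff_distrib mult.commute)
  finally have "prod_list ?qs = monom A (e * s) - [:b:]" .
  moreover have "degree (pcompose q (monom \<gamma> s)) \<le> totient e * s" if "q \<in> set qs" for q
    using degree_pcompose_le[of q "monom \<gamma> s"] degree_monom_le[of \<gamma> s] qs(2) that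
    by (meson le_trans mult_le_mono)
  then have "\<forall>q\<in>set ?qs. degree q \<le> totient e * s"
    by auto
  ultimately show ?thesis
    by (rule that)
qed

text \<open>If \<open>m y + 1 = e \<alpha>\<close> and \<open>m x = e \<beta> + 1\<close>, then \<open>T = a ^ y * b ^ x\<close> turns \<open>a T ^ m\<close> into
  \<open>b\<close> times the \<open>e\<close>-th power of \<open>a ^ \<alpha> * b ^ \<beta>\<close>.\<close>
lemma exists_power_twist:
  fixes a b :: int and m e :: nat
  assumes "a \<noteq> 0" "b \<noteq> 0" "m > 0" "e > 0" "coprime m e"
  obtains T \<delta> where "T \<noteq> 0" "a * T ^ m = b * \<delta> ^ e"
proof -
  obtain x \<beta> where x: "m * x = e * \<beta> + 1"
    using bezout_nat[of m e] assms by (auto simp: coprime_iff_gcd_eq_1)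
  obtain \<alpha> y where y: "e * \<alpha> = m * y + 1"
    using bezout_nat[of e m] assms by (auto simp: coprime_iff_gcd_eq_1 gcd.commute)
  have "a * (a ^ y * b ^ x) ^ m = a ^ (m * y + 1) * b ^ (m * x)"
    by (simp add: power_mult_distrib power_add power_mult[symmetric] mult_ac)
  also have "\<dots> = b * (a ^ \<alpha> * b ^ \<beta>) ^ e"
    unfolding x y[symmetric] by (simp add: power_mult_distrib power_add power_mult mult_ac)
  finally show ?thesis
    using assms by (intro that[of "a ^ y * b ^ x"]) simp_all
qed

lemma exists_simultaneous_power_scaling:
  fixes J :: "'i set" and a b :: "'i \<Rightarrow> int" and k e :: "'i \<Rightarrow> nat"
  assumes J: "finite J"
    and a: "\<And>j. j \<in> J \<Longrightarrow> a j \<noteq> 0"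
    and k: "\<And>j. j \<in> J \<Longrightarrow> k j > 0"
    and e: "\<And>j. j \<in> J \<Longrightarrow> e j > 0"
    and coprime_e: "\<And>i j. i \<in> J \<Longrightarrow> j \<in> J \<Longrightarrow> i \<noteq> j \<Longrightarrow> coprime (e i) (e j)"
    and coprime_k: "\<And>j. j \<in> J \<Longrightarrow> coprime (k j) (e j)"
  obtains c :: int
  where "c \<noteq> 0" "\<And>j. j \<in> J \<Longrightarrow> b j \<noteq> 0 \<Longrightarrow> \<exists>\<gamma>. a j * c ^ k j = b j * \<gamma> ^ e j"
proof -
  define E where "E j = (\<Prod>i\<in>J - {j}. e i)" for j
  have twist: "\<exists>T. T \<noteq> 0 \<and> (b j \<noteq> 0 \<longrightarrow> (\<exists>\<delta>. a j * T ^ (k j * E j) = b j * \<delta> ^ e j))"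
    if j: "j \<in> J" for j
  proof (cases "b j = 0")
    case False
    have "coprime (E j) (e j)"
      unfolding E_def using coprime_e j by (intro prod_coprime_left) auto
    moreover have "E j > 0"
      unfolding E_def using e by (intro prod_pos) auto
    ultimately obtain T \<delta> where "T \<noteq> 0" "a j * T ^ (k j * E j) = b j * \<delta> ^ e j"
      using exists_power_twist[of "a j" "b j" "k j * E j" "e j"] a k e coprime_k j False by auto
    then show ?thesis by blast
  qed (rule exI[of _ 1], simp)
  then have twists: "\<forall>j\<in>J. \<exists>T. T \<noteq> 0 \<and> (b j \<noteq> 0 \<longrightarrow> (\<exists>\<delta>. a j * T ^ (k j * E j) = b j * \<delta> ^ e j))"
    by blast
  obtain T where T: "\<forall>j\<in>J. T j \<noteq> 0 \<and>
      (b j \<noteq> 0 \<longrightarrow> (\<exists>\<delta>. a j * T j ^ (k j * E j) = b j * \<delta> ^ e j))"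
    using bchoice[OF twists] by (rule exE)
  define c where "c = (\<Prod>i\<in>J. T i ^ E i)"
  show ?thesis
  proof (rule that)
    show "c \<noteq> 0"
      unfolding c_def using J T by simp
  next
    fix j assume j: "j \<in> J" and bj: "b j \<noteq> 0"
    obtain \<delta> where \<delta>: "a j * T j ^ (k j * E j) = b j * \<delta> ^ e j"
      using T j bj by blast
    \<comment> \<open>every other factor of \<open>c\<close> is already an \<open>e j\<close>-th power\<close>
    define P where "P = (\<Prod>i\<in>J - {j}. T i ^ (k j * (\<Prod>i'\<in>J - {i} - {j}. e i')))"
    have E_split: "E i = e j * (\<Prod>i'\<in>J - {i} - {j}. e i')" if "i \<in> J - {j}" for i
      unfolding E_def using that j J by (subst prod.remove[of "J - {i}" j]) auto
    have "c ^ k j = T j ^ (k j * E j) * (\<Prod>i\<in>J - {j}. T i ^ (k j * E i))"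
      unfolding c_def prod_power_distrib using J j
      by (simp add: prod.remove power_mult[symmetric] mult.commute)
    also have "(\<Prod>i\<in>J - {j}. T i ^ (k j * E i)) = P ^ e j"
      unfolding P_def prod_power_distrib
      by (intro prod.cong refl) (simp add: E_split power_mult[symmetric] mult_ac)
    finally have "a j * c ^ k j = b j * (\<delta> * P) ^ e j"
      using \<delta> by (simp add: power_mult_distrib mult_ac)
    then show "\<exists>\<gamma>. a j * c ^ k j = b j * \<gamma> ^ e j" ..
  qed
qed

lemma prod_list_concat: "prod_list (concat xss) = prod_list (map prod_list xss)"
  by (induction xss) simp_all

lemma composition_factorization:
  fixes J :: "'i set" and a b :: "'i \<Rightarrow> int" and k e :: "'i \<Rightarrow> nat"
  assumes J: "finite J"
    and a: "\<And>j. j \<in> J \<Longrightarrow> a j \<noteq> 0"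
    and k: "\<And>j. j \<in> J \<Longrightarrow> k j > 0"
    and e: "\<And>j. j \<in> J \<Longrightarrow> e j > 0"
    and coprime_e: "\<And>i j. i \<in> J \<Longrightarrow> j \<in> J \<Longrightarrow> i \<noteq> j \<Longrightarrow> coprime (e i) (e j)"
    and coprime_k: "\<And>j. j \<in> J \<Longrightarrow> coprime (k j) (e j)"
  obtains c :: int and ps :: "int poly list"
  where "c \<noteq> 0"
    "pcompose (\<Prod>j\<in>J. monom (a j) (k j) - [:b j:]) (monom c (\<Prod>j\<in>J. e j)) = prod_list ps"
    "\<forall>p\<in>set ps. \<exists>j\<in>J. degree p \<le> totient (e j) * (k j * (\<Prod>i\<in>J - {j}. e i))"
proof -
  define E where "E j = (\<Prod>i\<in>J - {j}. e i)" for j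
  have E_pos: "E j > 0" for j
    unfolding E_def using e by (intro prod_pos) auto
  have prod_e: "(\<Prod>i\<in>J. e i) = e j * E j" if "j \<in> J" for j
    unfolding E_def using J that by (simp add: prod.remove)
  obtain c where c: "c \<noteq> 0" "\<And>j. j \<in> J \<Longrightarrow> b j \<noteq> 0 \<Longrightarrow> \<exists>\<gamma>. a j * c ^ k j = b j * \<gamma> ^ e j"
    using exists_simultaneous_power_scaling[of J a k e b, OF J a k e coprime_e coprime_k] by blast
  have "\<exists>qs. prod_list qs = monom (a j * c ^ k j) (e j * (k j * E j)) - [:b j:] \<and>
      (\<forall>q\<in>set qs. degree q \<le> totient (e j) * (k j * E j))" if j: "j \<in> J" for j
    using binomial_factorization[of "e j" "k j * E j" "b j" "a j * c ^ k j"] c(2)[OF j] e k E_pos j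
    by (metis mult_pos_pos)
  then obtain Q where Q: "\<And>j. j \<in> J \<Longrightarrow>
      prod_list (Q j) = monom (a j * c ^ k j) (e j * (k j * E j)) - [:b j:] \<and>
      (\<forall>q\<in>set (Q j). degree q \<le> totient (e j) * (k j * E j))"
    by metis
  obtain js where js: "set js = J" "distinct js"
    using finite_distinct_list[OF J] by blast
  define ps where "ps = concat (map Q js)"
  show ?thesis
  proof (rule that[of c ps])
    have "pcompose (monom (a j) (k j) - [:b j:]) (monom c (\<Prod>i\<in>J. e i)) = prod_list (Q j)"
      if "j \<in> J" for j
      using Q[OF that] prod_e[OF that]
      by (simp add: pcompose_diff pcompose_monom monom_power smult_monom mult_ac)
    then show "pcompose (\<Prod>j\<in>J. monom (a j) (k j) - [:b j:]) (monom c (\<Prod>j\<in>J. e j)) = prod_list ps"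
      unfolding pcompose_prod ps_def prod_list_concat
      using prod.distinct_set_conv_list[OF js(2), of "\<lambda>j. prod_list (Q j)"] js(1)
      by (simp add: o_def)
    show "\<forall>p\<in>set ps. \<exists>j\<in>J. degree p \<le> totient (e j) * (k j * (\<Prod>i\<in>J - {j}. e i))"
      using Q js(1) unfolding ps_def E_def by fastforce
  qed (rule c(1))
qed

section \<open>Mertens' estimate and balanced classes of primes\<close>

lemma multiplicity_le_self:
  fixes p n :: nat
  assumes "prime p" "n > 0"
  shows "multiplicity p n \<le> n"
proof -
  have "2 ^ multiplicity p n \<le> p ^ multiplicity p n"
    using prime_ge_2_nat[OF assms(1)] by (intro power_mono) simp_all
  also have "\<dots> \<le> n"
    using assms(2) by (intro dvd_imp_le multiplicity_dvd) simp
  finally show ?thesis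
    using less_exp[of "multiplicity p n"] by linarith
qed

lemma real_eq_prod_primes_le_power_multiplicity:
  fixes n Y :: nat
  assumes "0 < n" "n \<le> Y"
  shows "real n = (\<Prod>p | prime p \<and> p \<le> Y. real p ^ multiplicity p n)"
proof -
  have "real n = real (\<Prod>p\<in>prime_factors n. p ^ multiplicity p n)"
    using prime_factorization_nat[OF assms(1)] by simp
  also have "\<dots> = (\<Prod>p\<in>prime_factors n. real p ^ multiplicity p n)"
    by simp
  also have "\<dots> = (\<Prod>p | prime p \<and> p \<le> Y. real p ^ multiplicity p n)"
  proof (rule prod.mono_neutral_left)
    show "prime_factors n \<subseteq> {p. prime p \<and> p \<le> Y}"
    proof
      fix p assume "p \<in> prime_factors n"
      then have "prime p" "p \<le> n"
        using assms(1) by (auto simp: in_prime_factors_iff intro: dvd_imp_le)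
      then show "p \<in> {p. prime p \<and> p \<le> Y}"
        using assms(2) by simp
    qed
    show "\<forall>p\<in>{p. prime p \<and> p \<le> Y} - prime_factors n. real p ^ multiplicity p n = 1"
      using assms(1) by (auto simp: prime_factors_multiplicity)
  qed simp
  finally show ?thesis .
qed

text \<open>Every \<open>1/n\<close> with \<open>n \<le> Y\<close> occurs exactly once when the product is expanded, via the
  exponent vector of \<open>n\<close>.\<close>
lemma harm_le_prod_geometric:
  "harm Y \<le> (\<Prod>p | prime p \<and> p \<le> Y. \<Sum>i\<le>Y. inverse (real p) ^ i)"
proof -
  define A where "A = {p. prime p \<and> p \<le> Y}"
  define h where "h n = restrict (\<lambda>p. multiplicity p n) A" for n :: nat
  define F where "F g = (\<Prod>p\<in>A. inverse (real p) ^ g p)" for g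
  have n_eq: "real n = (\<Prod>p\<in>A. real p ^ h n p)" if "n \<in> {1..Y}" for n
    using real_eq_prod_primes_le_power_multiplicity[of n Y] that by (simp add: A_def h_def)
  have F_h: "F (h n) = inverse (real n)" if "n \<in> {1..Y}" for n
    using n_eq[OF that] prod_inversef[of "\<lambda>p. real p ^ h n p" A]
    by (simp add: F_def power_inverse o_def)
  have "inj_on h {1..Y}"
  proof (rule inj_onI)
    fix m n assume "m \<in> {1..Y}" "n \<in> {1..Y}" "h m = h n"
    then have "real m = real n"
      using n_eq by simp
    then show "m = n" by simp
  qed
  have "h ` {1..Y} \<subseteq> PiE A (\<lambda>_. {..Y})"
  proof
    fix g assume "g \<in> h ` {1..Y}"
    then obtain n where n: "n \<in> {1..Y}" "g = h n" by blast
    have "multiplicity p n \<le> Y" if "p \<in> A" for p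
      using multiplicity_le_self[of p n] that n by (simp add: A_def)
    then show "g \<in> PiE A (\<lambda>_. {..Y})"
      using n by (auto simp: h_def)
  qed
  have "finite A"
    by (simp add: A_def)
  have "harm Y = (\<Sum>n\<in>{1..Y}. F (h n))"
    unfolding harm_def by (intro sum.cong refl) (simp add: F_h)
  also have "\<dots> = (\<Sum>g\<in>h ` {1..Y}. F g)"
    using \<open>inj_on h {1..Y}\<close> by (simp add: sum.reindex)
  also have "\<dots> \<le> (\<Sum>g\<in>PiE A (\<lambda>_. {..Y}). F g)"
    using \<open>finite A\<close> \<open>h ` {1..Y} \<subseteq> PiE A (\<lambda>_. {..Y})\<close>
    by (intro sum_mono2) (simp_all add: finite_PiE F_def prod_nonneg)
  also have "\<dots> = (\<Prod>p\<in>A. \<Sum>i\<le>Y. inverse (real p) ^ i)"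
    unfolding F_def by (rule prod_sum_PiE[symmetric]) (simp_all add: A_def)
  finally show ?thesis
    by (simp add: A_def)
qed

lemma sum_inverse_powers_le:
  fixes p :: nat
  assumes "p \<ge> 2"
  shows "(\<Sum>i\<le>Y. inverse (real p) ^ i) \<le> real p / (real p - 1)"
proof -
  have x: "0 \<le> inverse (real p)" "inverse (real p) < 1"
    using assms by (simp_all add: inverse_less_1_iff)
  have "(\<Sum>i\<le>Y. inverse (real p) ^ i) = (\<Sum>i<Suc Y. inverse (real p) ^ i)"
    by (simp add: lessThan_Suc_atMost)
  also have "\<dots> = (1 - inverse (real p) ^ Suc Y) / (1 - inverse (real p))"
    using x assms by (subst sum_gp_strict) simp_all
  also have "\<dots> \<le> 1 / (1 - inverse (real p))"
    using x by (intro divide_right_mono) simp_all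
  also have "\<dots> = real p / (real p - 1)"
    using assms by (simp add: field_simps)
  finally show ?thesis .
qed

lemma ln_ln_le_sum_primes:
  fixes Y :: nat
  assumes "Y \<ge> 1"
  shows "ln (ln (real Y + 1)) \<le> (\<Sum>p | prime p \<and> p \<le> Y. ln (real p / (real p - 1)))"
proof -
  define A where "A = {p. prime p \<and> p \<le> Y}"
  have ratio_pos: "real p / (real p - 1) > 0" if "p \<in> A" for p
    using prime_ge_2_nat[of p] that by (simp add: A_def)
  have "ln (real Y + 1) \<le> harm Y"
    by (rule ln_le_harm)
  also have "\<dots> \<le> (\<Prod>p\<in>A. \<Sum>i\<le>Y. inverse (real p) ^ i)"
    unfolding A_def by (rule harm_le_prod_geometric)
  also have "\<dots> \<le> (\<Prod>p\<in>A. real p / (real p - 1))"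
    by (intro prod_mono conjI sum_nonneg sum_inverse_powers_le) (simp_all add: A_def prime_ge_2_nat)
  finally have "ln (real Y + 1) \<le> (\<Prod>p\<in>A. real p / (real p - 1))" .
  moreover have "0 < ln (real Y + 1)"
    using assms by simp
  ultimately have "ln (ln (real Y + 1)) \<le> ln (\<Prod>p\<in>A. real p / (real p - 1))"
    using ln_mono by blast
  also have "\<dots> = (\<Sum>p\<in>A. ln (real p / (real p - 1)))"
    using ratio_pos by (intro ln_prod) (auto simp: A_def dest: prime_gt_1_nat)
  finally show ?thesis
    by (simp add: A_def)
qed

lemma ln_ratio_bounds:
  fixes p :: nat
  assumes "p \<ge> 2"
  shows "0 \<le> ln (real p / (real p - 1))" "ln (real p / (real p - 1)) \<le> 1"
proof -
  have ratio: "real p / (real p - 1) \<ge> 1"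
    using assms by (simp add: field_simps)
  then show "0 \<le> ln (real p / (real p - 1))"
    by simp
  have "ln (real p / (real p - 1)) \<le> real p / (real p - 1) - 1"
    using ratio by (intro ln_le_minus_one) simp
  also have "\<dots> = 1 / (real p - 1)"
    using assms by (simp add: field_simps)
  also have "\<dots> \<le> 1"
    using assms by simp
  finally show "ln (real p / (real p - 1)) \<le> 1" .
qed

lemma ln_ln_minus_le_sum_primes_greater:
  fixes K Y :: nat
  assumes "K < Y"
  shows "ln (ln (real Y + 1)) - (real K + 1) \<le> (\<Sum>p | prime p \<and> K < p \<and> p \<le> Y. ln (real p / (real p - 1)))"
proof -
  define w where "w p = ln (real p / (real p - 1))" for p :: nat
  have "card {p. prime p \<and> p \<le> K} \<le> card {..K}"
    by (rule card_mono) auto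
  then have small_primes: "(\<Sum>p | prime p \<and> p \<le> K. w p) \<le> real K + 1"
    using sum_bounded_above[of "{p. prime p \<and> p \<le> K}" w 1] ln_ratio_bounds(2)[OF prime_ge_2_nat]
    by (simp add: w_def)
  have "ln (ln (real Y + 1)) \<le> (\<Sum>p | prime p \<and> p \<le> Y. w p)"
    unfolding w_def using assms by (intro ln_ln_le_sum_primes) simp
  also have "\<dots> = (\<Sum>p | prime p \<and> K < p \<and> p \<le> Y. w p) + (\<Sum>p | prime p \<and> p \<le> K. w p)"
    using assms by (subst sum.union_disjoint[symmetric]) (auto intro: sum.cong)
  finally show ?thesis
    using small_primes by (simp add: w_def)
qed

text \<open>Greedy construction: each new element goes into a currently lightest class.\<close>
lemma exists_partition_nearly_balanced:
  fixes A :: "'a set" and w :: "'a \<Rightarrow> real" and l :: nat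
  assumes "finite A" "l \<ge> 1" "\<forall>x\<in>A. 0 \<le> w x \<and> w x \<le> 1"
  shows "\<exists>part. (\<forall>x\<in>A. part x \<in> {1..l}) \<and> (\<forall>i\<in>{1..l}. \<forall>j\<in>{1..l}.
    (\<Sum>x | x \<in> A \<and> part x = j. w x) \<le> (\<Sum>x | x \<in> A \<and> part x = i. w x) + 1)"
  using assms
proof (induction A rule: finite_induct)
  case empty
  show ?case by simp
next
  case (insert a A)
  then obtain part where part: "\<forall>x\<in>A. part x \<in> {1..l}"
    "\<forall>i\<in>{1..l}. \<forall>j\<in>{1..l}. (\<Sum>x | x \<in> A \<and> part x = j. w x) \<le> (\<Sum>x | x \<in> A \<and> part x = i. w x) + 1"
    by auto
  define S where "S j = (\<Sum>x | x \<in> A \<and> part x = j. w x)" for j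
  have "S ` {1..l} \<noteq> {}"
    using insert.prems(1) by simp
  then obtain j0 where j0: "j0 \<in> {1..l}" "S j0 = Min (S ` {1..l})"
    using Min_in[of "S ` {1..l}"] by fastforce
  have j0_min: "S j0 \<le> S j" if "j \<in> {1..l}" for j
    using that unfolding j0(2) by simp
  define part' where "part' = part(a := j0)"
  have S': "(\<Sum>x | x \<in> insert a A \<and> part' x = j. w x) = S j + (if j = j0 then w a else 0)" for j
  proof -
    have "{x. x \<in> insert a A \<and> part' x = j} =
        (if j = j0 then insert a {x. x \<in> A \<and> part x = j} else {x. x \<in> A \<and> part x = j})"
      using insert.hyps(2) by (auto simp: part'_def)
    then show ?thesis
      using insert.hyps by (simp add: S_def)
  qed
  have wa: "0 \<le> w a" "w a \<le> 1"
    using insert.prems by auto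
  show ?case
  proof (intro exI[of _ part'] conjI ballI)
    fix x assume "x \<in> insert a A"
    then show "part' x \<in> {1..l}"
      using part(1) j0(1) by (auto simp: part'_def)
  next
    fix i j assume ij: "i \<in> {1..l}" "j \<in> {1..l}"
    have "S j \<le> S i + 1"
      using part(2) ij by (simp add: S_def)
    then show "(\<Sum>x | x \<in> insert a A \<and> part' x = j. w x) \<le> (\<Sum>x | x \<in> insert a A \<and> part' x = i. w x) + 1"
      unfolding S' using j0_min[OF ij(1)] wa by auto
  qed
qed

lemma exists_partition_sum_ge:
  fixes A :: "'a set" and w :: "'a \<Rightarrow> real" and l :: nat
  assumes A: "finite A" and l: "l \<ge> 1" and w: "\<forall>x\<in>A. 0 \<le> w x \<and> w x \<le> 1"
  obtains part where "\<forall>x\<in>A. part x \<in> {1..l}"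
    "\<forall>j\<in>{1..l}. (\<Sum>x | x \<in> A \<and> part x = j. w x) \<ge> (\<Sum>x\<in>A. w x) / real l - 1"
proof -
  obtain part where part: "\<forall>x\<in>A. part x \<in> {1..l}" "\<forall>i\<in>{1..l}. \<forall>j\<in>{1..l}.
      (\<Sum>x | x \<in> A \<and> part x = j. w x) \<le> (\<Sum>x | x \<in> A \<and> part x = i. w x) + 1"
    using exists_partition_nearly_balanced[OF assms] by blast
  define S where "S j = (\<Sum>x | x \<in> A \<and> part x = j. w x)" for j
  have total: "(\<Sum>j\<in>{1..l}. S j) = (\<Sum>x\<in>A. w x)"
    using sum.group[of A "{1..l}" part w] A part(1) by (simp add: S_def image_subset_iff)
  have "(\<Sum>x\<in>A. w x) / real l - 1 \<le> S i" if i: "i \<in> {1..l}" for i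
  proof -
    have "(\<Sum>x\<in>A. w x) \<le> (\<Sum>j\<in>{1..l}. S i + 1)"
      unfolding total[symmetric] using part(2) i by (intro sum_mono) (simp add: S_def)
    then show ?thesis
      using l by (simp add: field_simps)
  qed
  then show ?thesis
    using part(1) that unfolding S_def by blast
qed

lemma totient_prod_primes:
  fixes A :: "nat set"
  assumes "finite A" "\<forall>p\<in>A. prime p"
  shows "real (totient (\<Prod>A)) = real (\<Prod>A) * (\<Prod>p\<in>A. 1 - 1 / real p)"
proof -
  have "totient (\<Prod>A) = (\<Prod>p\<in>A. totient p)"
    using assms(2) by (intro totient_prod_coprime) (auto simp: pairwise_def primes_coprime)
  also have "\<dots> = (\<Prod>p\<in>A. p - 1)"
    using assms(2) by (intro prod.cong refl) (simp add: totient_prime)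
  finally have "real (totient (\<Prod>A)) = (\<Prod>p\<in>A. real (p - 1))"
    by simp
  also have "\<dots> = (\<Prod>p\<in>A. real p * (1 - 1 / real p))"
  proof (rule prod.cong[OF refl])
    fix p assume "p \<in> A"
    then have "p \<ge> 1"
      using assms(2) prime_ge_1_nat by blast
    then show "real (p - 1) = real p * (1 - 1 / real p)"
      by (simp add: of_nat_diff field_simps)
  qed
  finally show ?thesis
    by (simp add: prod.distrib)
qed

lemma prod_one_minus_inverse_eq_exp:
  fixes A :: "nat set"
  assumes "finite A" "\<forall>p\<in>A. p \<ge> 2"
  shows "(\<Prod>p\<in>A. 1 - 1 / real p) = exp (- (\<Sum>p\<in>A. ln (real p / (real p - 1))))"
proof -
  have "exp (- ln (real p / (real p - 1))) = 1 - 1 / real p" if "p \<in> A" for p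
  proof -
    have "real p \<ge> 2"
      using assms(2) that by simp
    then have "real p / (real p - 1) > 0"
      by simp
    then show ?thesis
      using \<open>real p \<ge> 2\<close> by (simp add: exp_minus field_simps)
  qed
  then show ?thesis
    using assms(1) by (simp add: sum_negf[symmetric] exp_sum)
qed

lemma ln_ln_prod_le:
  fixes S :: "nat set" and Y :: nat
  assumes "finite S" "\<forall>p\<in>S. 0 < p \<and> p \<le> Y" "Y \<ge> 2" "\<Prod>S > 1"
  shows "ln (ln (real (\<Prod>S))) \<le> 2 * ln (real Y + 1)"
proof -
  have "ln (real (\<Prod>S)) = (\<Sum>p\<in>S. ln (real p))"
    using assms(1,2) by (simp add: ln_prod)
  also have "\<dots> \<le> (\<Sum>p\<in>S. ln (real Y))"
    using assms(2) by (intro sum_mono ln_mono) simp_all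
  also have "\<dots> \<le> real Y * ln (real Y)"
  proof -
    have "card S \<le> card {1..Y}"
      using assms(2) by (intro card_mono) auto
    then show ?thesis
      using assms(3) by (simp add: mult_right_mono)
  qed
  moreover have "0 < ln (real (\<Prod>S))"
    using assms(4) by (intro ln_gt_zero) linarith
  ultimately have "ln (ln (real (\<Prod>S))) \<le> ln (real Y * ln (real Y))"
    by (intro ln_mono) simp_all
  also have "\<dots> = ln (real Y) + ln (ln (real Y))"
    using assms(3) by (simp add: ln_mult)
  also have "\<dots> \<le> 2 * ln (real Y)"
    using ln_less_self[of "ln (real Y)"] assms(3) by (simp add: less_imp_le)
  also have "\<dots> \<le> 2 * ln (real Y + 1)"
    using assms(3) by simp
  finally show ?thesis .
qed

lemma ln_ln_ge_one:
  fixes x :: real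
  assumes "x \<ge> 27"
  shows "ln (ln x) \<ge> 1"
proof -
  have "exp 1 \<le> (3 :: real)"
    using exp_le by simp
  have "exp (3 :: real) = exp 1 ^ 3"
    using exp_of_nat_mult[of 3 "1 :: real"] by simp
  also have "\<dots> \<le> 3 ^ 3"
    using \<open>exp 1 \<le> 3\<close> by (intro power_mono) simp_all
  finally have "exp (3 :: real) \<le> 27"
    by simp
  then have "ln x \<ge> 3"
    using assms by (subst ln_ge_iff) simp_all
  then show ?thesis
    using \<open>exp 1 \<le> 3\<close> by (subst ln_ge_iff) simp_all
qed

lemma exp_neg_le_div_powr:
  fixes l :: nat and L M W C :: real
  assumes l: "l \<ge> 1" and C: "C \<ge> 0" and M: "0 < M" "M \<le> 2 * L"
    and W: "W \<ge> (ln L - C) / real l - 1"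
  shows "exp (- W) \<le> 2 * exp (C + 1) / M powr (1 / real l)"
proof -
  have L: "L > 0"
    using M by simp
  have "C / real l \<le> C"
    using l C mult_left_mono[of 1 "real l" C] by (simp add: divide_le_eq)
  then have "- W \<le> (C + 1) - ln L / real l"
    using W by (simp add: diff_divide_distrib)
  then have "exp (- W) \<le> exp (C + 1) / L powr (1 / real l)"
    using L by (simp add: powr_def exp_diff[symmetric])
  also have "M powr (1 / real l) \<le> 2 * L powr (1 / real l)"
  proof -
    have "M powr (1 / real l) \<le> (2 * L) powr (1 / real l)"
      using M by (intro powr_mono2) simp_all
    also have "\<dots> = 2 powr (1 / real l) * L powr (1 / real l)"
      using L by (simp add: powr_mult)
    also have "2 powr (1 / real l) \<le> 2 powr 1"
      using l by (intro powr_mono) simp_all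
    finally show ?thesis
      using L by (simp add: mult_right_mono)
  qed
  then have "exp (C + 1) / L powr (1 / real l) \<le> 2 * exp (C + 1) / M powr (1 / real l)"
    using L M by (simp add: field_simps)
  finally show ?thesis .
qed

lemma exists_prime_partition:
  fixes K D l :: nat
  assumes l: "l \<ge> 1"
  obtains S :: "nat set" and part :: "nat \<Rightarrow> nat"
  where "finite S" "\<forall>p\<in>S. prime p \<and> K < p" "\<forall>p\<in>S. part p \<in> {1..l}" "\<Prod>S \<ge> D"
    "\<forall>j\<in>{1..l}. (\<Prod>p | p \<in> S \<and> part p = j. 1 - 1 / real p)
        \<le> 2 * exp (real K + 2) / ln (ln (real (\<Prod>S))) powr (1 / real l)"
proof -
  obtain Y where Y: "prime Y" "K + D + 27 < Y"
    using bigger_prime by blast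
  define S where "S = {p. prime p \<and> K < p \<and> p \<le> Y}"
  define w where "w p = ln (real p / (real p - 1))" for p :: nat
  have S: "finite S" "\<forall>p\<in>S. prime p \<and> K < p"
    by (simp_all add: S_def)
  have w: "\<forall>p\<in>S. 0 \<le> w p \<and> w p \<le> 1"
    using ln_ratio_bounds[OF prime_ge_2_nat] by (simp add: S_def w_def)
  obtain part where part: "\<forall>p\<in>S. part p \<in> {1..l}"
    "\<forall>j\<in>{1..l}. (\<Sum>p | p \<in> S \<and> part p = j. w p) \<ge> (\<Sum>p\<in>S. w p) / real l - 1"
    using exists_partition_sum_ge[OF S(1) l w] by blast
  have "Y \<le> \<Prod>S"
    using Y S(1) by (intro dvd_imp_le dvd_prodI prod_pos) (auto simp: S_def prime_gt_0_nat)
  then have Y_le: "real Y \<le> real (\<Prod>S)"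
    by (simp only: of_nat_le_iff)
  have mertens: "ln (ln (real Y + 1)) - (real K + 1) \<le> (\<Sum>p\<in>S. w p)"
    unfolding S_def w_def using Y(2) by (intro ln_ln_minus_le_sum_primes_greater) simp
  have lnln: "ln (ln (real (\<Prod>S))) \<le> 2 * ln (real Y + 1)"
  proof (rule ln_ln_prod_le[OF S(1)])
    show "\<forall>p\<in>S. 0 < p \<and> p \<le> Y"
      by (simp add: S_def prime_gt_0_nat)
    show "Y \<ge> 2" "\<Prod>S > 1"
      using Y(2) \<open>Y \<le> \<Prod>S\<close> by simp_all
  qed
  have "27 \<le> \<Prod>S"
    using Y(2) \<open>Y \<le> \<Prod>S\<close> by simp
  then have "27 \<le> real (\<Prod>S)"
    by (metis of_nat_le_iff of_nat_numeral)
  then have lnln_pos: "0 < ln (ln (real (\<Prod>S)))"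
    using ln_ln_ge_one[of "real (\<Prod>S)"] by linarith
  show ?thesis
  proof (rule that[OF S(1) S(2) part(1)])
    show "\<Prod>S \<ge> D"
      using \<open>Y \<le> \<Prod>S\<close> Y(2) by simp
    show "\<forall>j\<in>{1..l}. (\<Prod>p | p \<in> S \<and> part p = j. 1 - 1 / real p)
        \<le> 2 * exp (real K + 2) / ln (ln (real (\<Prod>S))) powr (1 / real l)"
    proof
      fix j assume j: "j \<in> {1..l}"
      have "(ln (ln (real Y + 1)) - (real K + 1)) / real l \<le> (\<Sum>p\<in>S. w p) / real l"
        using mertens by (simp add: divide_right_mono)
      then have W: "(\<Sum>p | p \<in> S \<and> part p = j. w p) \<ge> (ln (ln (real Y + 1)) - (real K + 1)) / real l - 1"
        using part(2) j by fastforce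
      have "(\<Prod>p | p \<in> S \<and> part p = j. 1 - 1 / real p) = exp (- (\<Sum>p | p \<in> S \<and> part p = j. w p))"
        unfolding w_def using S by (intro prod_one_minus_inverse_eq_exp) (auto simp: prime_ge_2_nat)
      also have "\<dots> \<le> 2 * exp (real K + 1 + 1) / ln (ln (real (\<Prod>S))) powr (1 / real l)"
        using l lnln_pos lnln W by (intro exp_neg_le_div_powr) simp_all
      finally show "(\<Prod>p | p \<in> S \<and> part p = j. 1 - 1 / real p)
          \<le> 2 * exp (real K + 2) / ln (ln (real (\<Prod>S))) powr (1 / real l)"
        by (simp add: add.assoc)
    qed
  qed
qed

section \<open>Smooth compositions\<close>

lemma coprime_prod_primes_greater:
  fixes A :: "nat set" and m :: nat
  assumes "\<forall>p\<in>A. prime p \<and> m < p" "m > 0"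
  shows "coprime m (\<Prod>A)"
proof (rule prod_coprime_right)
  fix p assume "p \<in> A"
  then have "prime p" "\<not> p dvd m"
    using assms dvd_imp_le[of p m] by auto
  then show "coprime m p"
    using prime_imp_coprime[of p m] coprime_commute by blast
qed

lemma prime_classes_composition_factorization:
  fixes J :: "'i set" and S :: "nat set" and part :: "nat \<Rightarrow> 'i"
    and k :: "'i \<Rightarrow> nat" and a b :: "'i \<Rightarrow> int" and K :: nat
  assumes J: "finite J" and S: "finite S" "\<forall>p\<in>S. prime p \<and> K < p" and part: "\<forall>p\<in>S. part p \<in> J"
    and k: "\<forall>j\<in>J. 1 \<le> k j \<and> k j \<le> K" and a: "\<forall>j\<in>J. a j \<noteq> 0"
  obtains c :: int and ps :: "int poly list"
  where "c \<noteq> 0" "pcompose (\<Prod>j\<in>J. monom (a j) (k j) - [:b j:]) (monom c (\<Prod>S)) = prod_list ps"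
    "\<forall>p\<in>set ps. \<exists>j\<in>J. real (degree p) \<le> real K * real (\<Prod>S) * (\<Prod>q | q \<in> S \<and> part q = j. 1 - 1 / real q)"
proof -
  define C where "C j = {p. p \<in> S \<and> part p = j}" for j
  define e where "e j = \<Prod>(C j)" for j
  have C: "finite (C j)" "\<forall>p\<in>C j. prime p \<and> K < p" for j
    using S by (simp_all add: C_def)
  have e_pos: "e j > 0" for j
    using C by (simp add: e_def prime_gt_0_nat)
  have prod_e: "(\<Prod>j\<in>J. e j) = \<Prod>S"
    using prod.group[of S J part "\<lambda>p. p"] S(1) J part
    by (simp add: e_def C_def image_subset_iff)
  have coprime_e: "coprime (e i) (e j)" if "i \<noteq> j" for i j
    unfolding e_def using C that
    by (intro prod_coprime_left prod_coprime_right primes_coprime) (auto simp: C_def)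
  have coprime_k: "coprime (k j) (e j)" if "j \<in> J" for j
    unfolding e_def using C(2)[of j] k that by (intro coprime_prod_primes_greater) force+
  obtain c ps where c: "c \<noteq> 0"
    and comp: "pcompose (\<Prod>j\<in>J. monom (a j) (k j) - [:b j:]) (monom c (\<Prod>S)) = prod_list ps"
    and ps: "\<forall>p\<in>set ps. \<exists>j\<in>J. degree p \<le> totient (e j) * (k j * (\<Prod>i\<in>J - {j}. e i))"
  proof (rule composition_factorization[of J a k e b])
    show "\<And>j. j \<in> J \<Longrightarrow> a j \<noteq> 0" "\<And>j. j \<in> J \<Longrightarrow> k j > 0"
      using a k by force+
  qed (use that J e_pos coprime_e coprime_k in \<open>simp_all add: prod_e\<close>)
  have "\<exists>j\<in>J. real (degree p) \<le> real K * real (\<Prod>S) * (\<Prod>q | q \<in> S \<and> part q = j. 1 - 1 / real q)"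
    if "p \<in> set ps" for p
  proof -
    obtain j where j: "j \<in> J" and deg: "degree p \<le> totient (e j) * (k j * (\<Prod>i\<in>J - {j}. e i))"
      using ps \<open>p \<in> set ps\<close> by blast
    define P where "P = (\<Prod>q\<in>C j. 1 - 1 / real q)"
    have "0 \<le> P"
      using C(2)[of j] prime_ge_2_nat unfolding P_def by (intro prod_nonneg) force
    have "real (degree p) \<le> real (totient (e j)) * (real (k j) * real (\<Prod>i\<in>J - {j}. e i))"
      using deg by (simp only: of_nat_mult[symmetric] of_nat_le_iff)
    also have "\<dots> = real (k j) * real (\<Prod>S) * P"
      using totient_prod_primes[of "C j"] C[of j] prod.remove[OF J j, of e]
      by (simp add: e_def P_def prod_e[symmetric])
    also have "\<dots> \<le> real K * real (\<Prod>S) * P"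
      using k j \<open>0 \<le> P\<close> by (intro mult_right_mono) (simp_all add: prod_nonneg)
    finally show ?thesis
      using j by (auto simp: P_def C_def)
  qed
  with c comp show ?thesis
    using that by blast
qed

lemma exists_smooth_composition:
  fixes k :: "nat \<Rightarrow> nat" and a b :: "nat \<Rightarrow> int" and K l D :: nat
  assumes l: "l \<ge> 1" and k: "\<forall>j\<in>{1..l}. 1 \<le> k j \<and> k j \<le> K" and a: "\<forall>j\<in>{1..l}. a j \<noteq> 0"
  obtains g :: "int poly" and ps :: "int poly list"
  where "degree g \<ge> D" "pcompose (\<Prod>j\<in>{1..l}. monom (a j) (k j) - [:b j:]) g = prod_list ps"
    "\<forall>p\<in>set ps. real (degree p) \<le>
       2 * real K * exp (real K + 2) * real (degree g) / ln (ln (real (degree g))) powr (1 / real l)"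
proof -
  obtain S part where S: "finite S" "\<forall>p\<in>S. prime p \<and> K < p" and part: "\<forall>p\<in>S. part p \<in> {1..l}"
    and "\<Prod>S \<ge> D"
    and class_bound: "\<forall>j\<in>{1..l}. (\<Prod>p | p \<in> S \<and> part p = j. 1 - 1 / real p)
        \<le> 2 * exp (real K + 2) / ln (ln (real (\<Prod>S))) powr (1 / real l)"
    by (rule exists_prime_partition[OF l, of K D])
  obtain c ps where "c \<noteq> 0"
    and comp: "pcompose (\<Prod>j\<in>{1..l}. monom (a j) (k j) - [:b j:]) (monom c (\<Prod>S)) = prod_list ps"
    and ps: "\<forall>p\<in>set ps. \<exists>j\<in>{1..l}.
      real (degree p) \<le> real K * real (\<Prod>S) * (\<Prod>q | q \<in> S \<and> part q = j. 1 - 1 / real q)"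
    by (rule prime_classes_composition_factorization[OF finite_atLeastAtMost S part k a])
  have "real (degree p) \<le>
      2 * real K * exp (real K + 2) * real (\<Prod>S) / ln (ln (real (\<Prod>S))) powr (1 / real l)"
    if "p \<in> set ps" for p
  proof -
    obtain j where j: "j \<in> {1..l}"
      and deg: "real (degree p) \<le> real K * real (\<Prod>S) * (\<Prod>q | q \<in> S \<and> part q = j. 1 - 1 / real q)"
      using ps \<open>p \<in> set ps\<close> by blast
    note deg
    also have "\<dots> \<le> real K * real (\<Prod>S) * (2 * exp (real K + 2) / ln (ln (real (\<Prod>S))) powr (1 / real l))"
      using class_bound j by (intro mult_left_mono) (simp_all add: prod_nonneg)
    finally show ?thesis
      by (simp add: field_simps)
  qed
  with \<open>c \<noteq> 0\<close> \<open>\<Prod>S \<ge> D\<close> comp show ?thesis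
    by (intro that[of "monom c (\<Prod>S)" ps]) (simp_all add: degree_monom_eq)
qed

lemma admits_polysmoothnessI:
  assumes "degree g > 0" "pcompose f g \<noteq> 0" "pcompose f g = prod_list ps"
    and "\<forall>p\<in>set ps. real (degree p) \<le> \<theta> * real (degree f) * real (degree g)"
  shows "admits_polysmoothness f \<theta>"
  unfolding admits_polysmoothness_def
proof (intro exI[of _ g] conjI allI impI)
  fix q :: "int poly" assume q: "irreducible q \<and> q dvd pcompose f g"
  then have "prime_elem q"
    by (simp add: prime_elem_iff_irreducible)
  moreover have "q dvd prod_mset (mset ps)"
    using q assms(3) by (simp add: prod_mset_prod_list)
  ultimately obtain p where p: "p \<in> set ps" "q dvd p"
    by (auto elim: prime_elem_dvd_prod_msetE)
  have "p \<noteq> 0"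
    using p(1) assms(2,3) by (auto simp: prod_list_zero_iff)
  then have "real (degree q) \<le> real (degree p)"
    using p(2) by (simp add: dvd_imp_degree_le)
  also have "\<dots> \<le> \<theta> * real (degree f) * real (degree g)"
    using assms(4) p(1) by blast
  finally show "real (degree q) \<le> \<theta> * real (degree f) * real (degree g)" .
qed (use assms(1) in simp)

lemma ln_ln_powr_ge:
  fixes x c :: real and l :: nat
  assumes "c > 0" "l \<ge> 1" "x \<ge> exp (exp (c powr real l))"
  shows "ln (ln x) powr (1 / real l) \<ge> c"
proof -
  have "ln x \<ge> exp (c powr real l)"
    using assms(3) by (subst ln_ge_iff) (auto intro: order.strict_trans2[OF exp_gt_zero])
  then have "ln (ln x) \<ge> c powr real l"
    by (subst ln_ge_iff) (auto intro: order.strict_trans2[OF exp_gt_zero])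
  then have "ln (ln x) powr (1 / real l) \<ge> (c powr real l) powr (1 / real l)"
    using assms(1) by (intro powr_mono2) simp_all
  also have "(c powr real l) powr (1 / real l) = c"
    using assms(1,2) by (simp add: powr_powr)
  finally show ?thesis .
qed

lemma admits_polysmoothness_if_smooth_compositions:
  fixes f :: "int poly" and C \<epsilon> :: real and l :: nat
  assumes f: "degree f > 0" and C: "C > 0" and l: "l \<ge> 1" and \<epsilon>: "\<epsilon> > 0"
    and smooth: "\<forall>D. \<exists>g ps. degree g \<ge> D \<and> pcompose f g = prod_list ps \<and>
      (\<forall>p\<in>set ps. real (degree p) \<le> C * real (degree g) / ln (ln (real (degree g))) powr (1 / real l))"
  shows "admits_polysmoothness f \<epsilon>"
proof -
  define x where "x = exp (exp ((C / \<epsilon>) powr real l))"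
  obtain g ps where g: "degree g \<ge> nat \<lceil>x\<rceil>" and comp: "pcompose f g = prod_list ps"
    and ps: "\<forall>p\<in>set ps. real (degree p) \<le> C * real (degree g) / ln (ln (real (degree g))) powr (1 / real l)"
    using smooth by blast
  define d where "d = real (degree g)"
  have "x > 1"
    unfolding x_def by (simp add: one_less_exp_iff)
  then have "d \<ge> x" "degree g > 0"
    using g by (simp_all add: d_def)
  then have L: "C / \<epsilon> \<le> ln (ln d) powr (1 / real l)"
    using C \<epsilon> l by (intro ln_ln_powr_ge) (simp_all add: x_def)
  define L where "L = ln (ln d) powr (1 / real l)"
  have "0 < L"
    using L C \<epsilon> unfolding L_def by (meson divide_pos_pos less_le_trans)
  have "C * d / L = (C / L) * d"
    by simp
  also have "\<dots> \<le> \<epsilon> * d"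
    using L \<open>0 < L\<close> \<epsilon> \<open>d \<ge> x\<close> \<open>x > 1\<close>
    by (intro mult_right_mono) (simp_all add: L_def pos_divide_le_eq mult.commute)
  also have "\<dots> \<le> \<epsilon> * real (degree f) * d"
    using f \<epsilon> \<open>d \<ge> x\<close> \<open>x > 1\<close> by (simp add: mult_right_mono)
  finally have bound: "C * d / L \<le> \<epsilon> * real (degree f) * d" .
  show ?thesis
  proof (rule admits_polysmoothnessI[OF \<open>degree g > 0\<close> _ comp])
    show "pcompose f g \<noteq> 0"
      using f \<open>degree g > 0\<close> pcompose_eq_0_iff[of g f] by auto
    show "\<forall>p\<in>set ps. real (degree p) \<le> \<epsilon> * real (degree f) * real (degree g)"
      using ps bound unfolding d_def L_def by fastforce
  qed
qed

lemma degree_prod_binomials: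
  fixes a b :: "'i \<Rightarrow> 'a::idom" and k :: "'i \<Rightarrow> nat"
  assumes "finite J" "\<forall>j\<in>J. a j \<noteq> 0 \<and> k j > 0"
  shows "degree (\<Prod>j\<in>J. monom (a j) (k j) - [:b j:]) = (\<Sum>j\<in>J. k j)"
proof -
  have degree_factor: "degree (monom (a j) (k j) - [:b j:]) = k j" if "j \<in> J" for j
    using assms(2) that
    by (subst diff_conv_add_uminus, subst degree_add_eq_left) (simp_all add: degree_monom_eq)
  then have "monom (a j) (k j) - [:b j:] \<noteq> 0" if "j \<in> J" for j
    using assms(2) that by (metis degree_0 less_not_refl)
  then show ?thesis
    using degree_factor by (subst degree_prod_eq_sum_degree) simp_all
qed

theorem theorem2p1:
  fixes l :: nat and k :: "nat \<Rightarrow> nat"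
  assumes "l \<ge> 1" and "\<forall>j\<in>{1..l}. k j \<ge> 1"
  shows "\<exists>c > (0::real). \<forall>(a :: nat \<Rightarrow> int) (b :: nat \<Rightarrow> int).
    (\<Prod>j\<in>{1..l}. a j) \<noteq> 0 \<longrightarrow>
    (let f = (\<Prod>j\<in>{1..l}. monom (a j) (k j) - [:b j:]) in
      (\<forall>D :: nat. \<exists>g :: int poly. degree g \<ge> D \<and>
         (\<exists>ps :: int poly list. pcompose f g = prod_list ps \<and>
            (\<forall>p\<in>set ps. real (degree p) \<le>
               c * real (degree g) / (ln (ln (real (degree g)))) powr (1 / real l)))) \<and>
      (\<forall>\<epsilon> > 0. admits_polysmoothness f \<epsilon>))"
proof -
  define K where "K = (\<Sum>j\<in>{1..l}. k j)"
  have k: "\<forall>j\<in>{1..l}. 1 \<le> k j \<and> k j \<le> K"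
    using assms(2) by (auto simp: K_def intro: member_le_sum)
  then have "K \<ge> 1"
    using assms(1) by force
  show ?thesis
  proof (intro exI[of _ "2 * real K * exp (real K + 2)"] conjI allI impI)
    show "0 < 2 * real K * exp (real K + 2)"
      using \<open>K \<ge> 1\<close> by simp
    fix a b :: "nat \<Rightarrow> int"
    assume "(\<Prod>j\<in>{1..l}. a j) \<noteq> 0"
    then have a: "\<forall>j\<in>{1..l}. a j \<noteq> 0"
      by simp
    define f where "f = (\<Prod>j\<in>{1..l}. monom (a j) (k j) - [:b j:])"
    have smooth: "\<forall>D. \<exists>g ps. degree g \<ge> D \<and> pcompose f g = prod_list ps \<and>
      (\<forall>p\<in>set ps. real (degree p) \<le>
         2 * real K * exp (real K + 2) * real (degree g) / ln (ln (real (degree g))) powr (1 / real l))"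
    proof
      fix D
      obtain g ps where "degree g \<ge> D" "pcompose f g = prod_list ps"
        "\<forall>p\<in>set ps. real (degree p) \<le>
           2 * real K * exp (real K + 2) * real (degree g) / ln (ln (real (degree g))) powr (1 / real l)"
        unfolding f_def by (rule exists_smooth_composition[OF assms(1) k a, where D = D])
      then show "\<exists>g ps. degree g \<ge> D \<and> pcompose f g = prod_list ps \<and>
        (\<forall>p\<in>set ps. real (degree p) \<le>
           2 * real K * exp (real K + 2) * real (degree g) / ln (ln (real (degree g))) powr (1 / real l))"
        by blast
    qed
    have "degree f = K"
      unfolding f_def K_def using k a by (intro degree_prod_binomials) auto
    then have "\<forall>\<epsilon>>0. admits_polysmoothness f \<epsilon>"
      using admits_polysmoothness_if_smooth_compositions[OF _ _ assms(1) _ smooth] \<open>K \<ge> 1\<close> by simp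
    with smooth show "let f = (\<Prod>j\<in>{1..l}. monom (a j) (k j) - [:b j:]) in
      (\<forall>D. \<exists>g. D \<le> degree g \<and> (\<exists>ps. pcompose f g = prod_list ps \<and>
        (\<forall>p\<in>set ps. real (degree p) \<le>
           2 * real K * exp (real K + 2) * real (degree g) / ln (ln (real (degree g))) powr (1 / real l)))) \<and>
      (\<forall>\<epsilon>>0. admits_polysmoothness f \<epsilon>)"
      unfolding Let_def f_def[symmetric] by blast
  qed
qed

end
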